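(* For every state $p=p_1\otimes\cdots\otimes p_L\in B_{\lambda_1}\otimes\cdots\otimes B_{\lambda_L}$ and every $l\ge1$, $$\mathcal E_{n+1}(p)-\mathcal E_{n+1}(T_l(p))=E_l(p).$$
   Context: Fix $n\ge1$. For $l\ge1$ let $B_l=\{x=(x_1,\dots,x_{n+1})\in\mathbb Z_{\ge0}^{n+1}: \sum_i x_i=l\}$ and $u_l=(l,0,\dots,0)\in B_l$. Indices of $x$ are read modulo $n+1$. For $x\in B_l,y\in B_m$ and $i\in\mathbb Z$ put $Q_i(x\otimes y)=\min_{1\le k\le n+1}\big(\sum_{j=1}^{k-1}x_{i+j}+\sum_{j=k+1}^{n+1}y_{i+j}\big)$ (so $Q_{n+1}=Q_0$) and $H(x\otimes y)=\min(l,m)-Q_0(x\otimes y)$. The combinatorial $R$ is the map $B_l\otimes B_m\to B_m\otimes B_l$, $x\otimes y\mapsto\tilde y\otimes\tilde x$, $\tilde x_i=x_i+Q_i-Q_{i-1}$, $\tilde y_i=y_i+Q_{i-1}-Q_i$ ($Q_j=Q_j(x\otimes y)$); write $x\otimes y\simeq\tilde y\otimes\tilde x$, and extend $\simeq$ to tensor products by applying $R$ to adjacent factors. Box-ball system: for a state $p=p_1\otimes\cdots\otimes p_L\in B_{\lambda_1}\otimes\cdots\otimes B_{\lambda_L}$ and $l\ge1$ let $v_0=u_l$ and recursively $v_{j-1}\otimes p_j\simeq p'_j\otimes v_j$ ($1\le j\le L$); then $T_l(p)=p'_1\otimes\cdots\otimes p'_L$ and $E_l(p)=\sum_{j=1}^L\big(\min(\lambda_j,l)-H(v_{j-1}\otimes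 p_j)\big)$. Energy: for $q=q_1\otimes\cdots\otimes q_k$ and $1\le i\le n+1$ let $\mathcal E^\vee_i(q)=\sum_{1\le j<m\le k}Q_i(q_j\otimes q^{(j+1)}_m)$, where $q^{(j+1)}_m$ is defined by $q_{j+1}\otimes\cdots\otimes q_{m-1}\otimes q_m\simeq q^{(j+1)}_m\otimes(\cdots)$ (moving $q_m$ leftwards by successive combinatorial $R$'s; $q^{(m)}_m=q_m$), and $\mathcal E_i(q)=\mathcal E^\vee_i(u_N\otimes q)$ for any $N\ge\max_j\lambda_j$ (independent of such $N$). *)

theory Defs
  imports Main
begin

text \<open>Elements of the crystal B_l (for fixed n) are represented as integer lists
  of length n+1 with nonnegative entries summing to l.  Entry x_i (1-based,
  index read modulo n+1) is \<open>comp n x i\<close>.\<close>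

definition B :: "nat \<Rightarrow> nat \<Rightarrow> int list set" where
  "B n l = {x. length x = n + 1 \<and> (\<forall>a\<in>set x. 0 \<le> a) \<and> sum_list x = int l}"

definition u :: "nat \<Rightarrow> nat \<Rightarrow> int list" where
  "u n l = int l # replicate n 0"

definition comp :: "nat \<Rightarrow> int list \<Rightarrow> int \<Rightarrow> int" where
  "comp n x i = x ! nat ((i - 1) mod int (n + 1))"

definition wt :: "int list \<Rightarrow> int" where
  "wt x = sum_list x"

definition Q :: "nat \<Rightarrow> int \<Rightarrow> int list \<Rightarrow> int list \<Rightarrow> int" where
  "Q n i x y = Min ((\<lambda>k. (\<Sum>j\<in>{1..<k}. comp n x (i + int j))
                        + (\<Sum>j\<in>{k<..n+1}. comp n y (i + int j))) ` {1..n+1})"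

definition H :: "nat \<Rightarrow> int list \<Rightarrow> int list \<Rightarrow> int" where
  "H n x y = min (wt x) (wt y) - Q n 0 x y"

text \<open>Combinatorial R: x \<otimes> y \<mapsto> ytilde \<otimes> xtilde, returned as the pair (ytilde, xtilde).\<close>
definition R :: "nat \<Rightarrow> int list \<Rightarrow> int list \<Rightarrow> int list \<times> int list" where
  "R n x y =
     (map (\<lambda>i. comp n y (int i) + Q n (int i - 1) x y - Q n (int i) x y) [1..<n+2],
      map (\<lambda>i. comp n x (int i) + Q n (int i) x y - Q n (int i - 1) x y) [1..<n+2])"

text \<open>Box-ball run with carrier in B_l: returns (T_l(p), E_l(p)).\<close>
fun bbs_run :: "nat \<Rightarrow> nat \<Rightarrow> int list \<Rightarrow> int list list \<Rightarrow> int list list \<times> int" where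
  "bbs_run n l v [] = ([], 0)"
| "bbs_run n l v (p # ps) =
     (let (p', v') = R n v p; (rest, e) = bbs_run n l v' ps
      in (p' # rest, (min (wt p) (int l) - H n v p) + e))"

definition T :: "nat \<Rightarrow> nat \<Rightarrow> int list list \<Rightarrow> int list list" where
  "T n l p = fst (bbs_run n l (u n l) p)"

definition E :: "nat \<Rightarrow> nat \<Rightarrow> int list list \<Rightarrow> int" where
  "E n l p = snd (bbs_run n l (u n l) p)"

text \<open>Move y leftwards through xs by successive R's: for xs = [q_{j+1},...,q_{m-1}]
  and y = q_m this gives q^{(j+1)}_m.\<close>
definition moveL :: "nat \<Rightarrow> int list list \<Rightarrow> int list \<Rightarrow> int list" where
  "moveL n xs y = foldr (\<lambda>x y. fst (R n x y)) xs y"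

definition Edual :: "nat \<Rightarrow> int \<Rightarrow> int list list \<Rightarrow> int" where
  "Edual n i q = (\<Sum>(j, m) \<in> {(j, m). j < m \<and> m < length q}.
       Q n i (q ! j) (moveL n (take (m - j - 1) (drop (j + 1) q)) (q ! m)))"

text \<open>Energy: E_i(q) = Edual_i(u_N \<otimes> q), with the admissible choice N = max_j wt(q_j).\<close>
definition Energy :: "nat \<Rightarrow> int \<Rightarrow> int list list \<Rightarrow> int" where
  "Energy n i q = Edual n i (u n (nat (foldr max (map wt q) 0)) # q)"

end

theory Submission
  imports Defs Complex_Main
begin

(*
  The combinatorial R is the tropicalization of a geometric R-matrix on positive periodic
  sequences. Let M(a) be the bi-infinite lower bidiagonal matrix with diagonal a and unit
  subdiagonal; the geometric map x \<otimes> y \<mapsto> y' \<otimes> x', given by ratios of the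
  polynomial geom_Q whose tropicalization is Q, satisfies M(y) M(x) = M(x') M(y').

  Moving z to the left through x \<otimes> y in the two possible orders factors M(z) M(y) M(x) in two
  ways. A null vector of the last factor of the first factorization is quasi-periodic with the
  period product of z as multiplier, so the two outer factors of the second factorization, whose
  multipliers are those of x and y, cannot annihilate its image: it is also a null vector of the
  last factor of the second factorization. This gives the Yang-Baxter relation for the moving
  factor, and evaluating M(y) M(x) on that vector gives the additivity of the local energy.
  Lifting integers a to exp (- s a) and letting s tend to infinity transfers both identities to
  the combinatorial R.

  For the box-ball system, append the factors of the state one at a time. The Yang-Baxter
  relation lets the new factor z be moved through the carrier instead of through the updated
  state, and the energy identity shows that the new terms of E\<^sup>\<vee>(u\<^sub>N \<otimes> p) and
  E\<^sup>\<vee>(u\<^sub>N \<otimes> T\<^sub>l p) differ by Q(v, z) for the carrier v that meets z, which is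
  the local energy min(wt z, l) - H(v, z).
*)

section \<open>Periodic sequences\<close>

definition periodic :: "nat \<Rightarrow> (int \<Rightarrow> 'a) \<Rightarrow> bool" where
  "periodic N f \<longleftrightarrow> (\<forall>i. f (i + int N) = f i)"

lemma periodic_shift_left [simp]: "periodic N f \<Longrightarrow> f (i + int N) = f i"
  unfolding periodic_def by blast

lemma periodic_add_multiple:
  assumes "periodic N f"
  shows "f (i + int N * k) = f i"
proof (induction k rule: int_induct[where k = 0])
  case (step1 k)
  have "i + int N * (k + 1) = (i + int N * k) + int N"
    by (simp add: algebra_simps)
  then show ?case
    using step1 assms by (metis periodic_shift_left)
next
  case (step2 k)
  have "i + int N * k = (i + int N * (k - 1)) + int N"
    by (simp add: algebra_simps)
  then show ?case
    using step2 assms by (metis periodic_shift_left)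
qed simp

lemma periodic_shift_right [simp]: "periodic N f \<Longrightarrow> f (i - int N) = f i"
  using periodic_add_multiple[of N f i "-1"] by simp

context comm_monoid_set
begin

lemma periodic_window:
  assumes "periodic N g"
  shows "F (\<lambda>j. g (i + int j)) {..<N} = F (\<lambda>j. g (int j)) {..<N}"
proof -
  have step: "F (\<lambda>j. g (i + 1 + int j)) {..<N} = F (\<lambda>j. g (i + int j)) {..<N}" for i
  proof (cases N)
    case (Suc M)
    have "g (i + 1 + int M) = g i"
      using periodic_shift_left[OF assms, of i] Suc by (simp add: add.assoc)
    then have "F (\<lambda>j. g (i + 1 + int j)) {..<Suc M} = F (\<lambda>j. g (i + 1 + int j)) {..<M} \<^bold>* g i"
      by (simp only: lessThan_Suc)
    also have "\<dots> = F (\<lambda>j. g (i + int j)) {..<Suc M}"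
      by (subst lessThan_Suc_shift) (simp add: algebra_simps commute)
    finally show ?thesis
      using Suc by simp
  qed simp
  show ?thesis
  proof (induction i rule: int_induct[where k = 0])
    case (step1 i)
    then show ?case using step[of i] by simp
  next
    case (step2 i)
    then show ?case using step[of "i - 1"] by simp
  qed simp
qed

lemma atLeast1_lessThan_Suc_int_shift:
  "F (\<lambda>j. g (i + int j)) {1..<Suc k} = F (\<lambda>j. g (i + 1 + int j)) {..<k}"
  by (simp only: One_nat_def shift_bounds_Suc_ivl atLeast0LessThan) (simp add: ac_simps)

lemma lessThan_Suc_int_shift:
  "F (\<lambda>j. g (i + int j)) {..<Suc k} = g i \<^bold>* F (\<lambda>j. g (i + int j)) {1..<Suc k}"
  by (simp only: lessThan_Suc_shift atLeast1_lessThan_Suc_int_shift) (simp add: ac_simps)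

lemma periodic_tail_shift:
  assumes "periodic N g" "k < N"
  shows "g i \<^bold>* F (\<lambda>j. g (i - 1 + int j)) {Suc k<..N} = F (\<lambda>j. g (i + int j)) {k<..N}"
proof -
  have "{Suc k<..N} = {Suc (Suc k)..<Suc N}" "{k<..N} = {Suc k..<Suc N}"
    by auto
  moreover have "F (\<lambda>j. g (i - 1 + int j)) {Suc (Suc k)..<Suc N} = F (\<lambda>j. g (i + int j)) {Suc k..<N}"
    by (simp only: shift_bounds_Suc_ivl) simp
  moreover have "g (i + int N) = g i"
    using assms(1) by simp
  ultimately show ?thesis
    using assms(2) by (simp add: atLeastLessThan_Suc commute)
qed

end

section \<open>The geometric R-matrix\<close>

definition geom_Q :: "nat \<Rightarrow> (int \<Rightarrow> real) \<Rightarrow> (int \<Rightarrow> real) \<Rightarrow> int \<Rightarrow> real" where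
  "geom_Q N x y i =
     (\<Sum>k\<in>{1..N}. (\<Prod>j\<in>{1..<k}. x (i + int j)) * (\<Prod>j\<in>{k<..N}. y (i + int j)))"

definition period_prod :: "nat \<Rightarrow> (int \<Rightarrow> 'a::comm_monoid_mult) \<Rightarrow> 'a" where
  "period_prod N x = (\<Prod>j<N. x (int j))"

lemma geom_Q_difference:
  assumes px: "periodic N x" and py: "periodic N y"
  shows "x i * geom_Q N x y i - y i * geom_Q N x y (i - 1) = period_prod N x - period_prod N y"
proof -
  define F where "F k = (\<Prod>j<k. x (i + int j)) * (\<Prod>j\<in>{k<..N}. y (i + int j))" for k
  have "x i * geom_Q N x y i = (\<Sum>k<N. F (Suc k))"
    unfolding geom_Q_def One_nat_def sum.atLeast1_atMost_eq sum_distrib_left F_def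
    by (simp only: prod.lessThan_Suc_int_shift One_nat_def mult.assoc)
  moreover have "y i * geom_Q N x y (i - 1) = (\<Sum>k<N. F k)"
    unfolding geom_Q_def One_nat_def sum.atLeast1_atMost_eq sum_distrib_left
  proof (rule sum.cong)
    fix k assume "k \<in> {..<N}"
    then have "y i * (\<Prod>j\<in>{Suc k<..N}. y (i - 1 + int j)) = (\<Prod>j\<in>{k<..N}. y (i + int j))"
      using prod.periodic_tail_shift[OF py] by simp
    moreover have "(\<Prod>j\<in>{Suc 0..<Suc k}. x (i - 1 + int j)) = (\<Prod>j<k. x (i + int j))"
      using prod.atLeast1_lessThan_Suc_int_shift[of x "i - 1" k] by simp
    ultimately show "y i * ((\<Prod>j\<in>{Suc 0..<Suc k}. x (i - 1 + int j)) * (\<Prod>j\<in>{Suc k<..N}. y (i - 1 + int j)))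
        = F k"
      unfolding F_def by (simp add: mult.left_commute)
  qed simp
  moreover have "F N = period_prod N x"
    unfolding F_def period_prod_def using prod.periodic_window[OF px] by simp
  moreover have "F 0 = period_prod N y"
  proof -
    have "{0<..N} = {1..<Suc N}" by auto
    then have "(\<Prod>j\<in>{0<..N}. y (i + int j)) = (\<Prod>j<N. y (i + 1 + int j))"
      by (simp only: prod.atLeast1_lessThan_Suc_int_shift)
    then show ?thesis
      unfolding F_def period_prod_def using prod.periodic_window[OF py] by simp
  qed
  ultimately show ?thesis
    by (simp add: sum_subtractf[symmetric] sum_lessThan_telescope)
qed

definition pos_periodic :: "nat \<Rightarrow> (int \<Rightarrow> real) \<Rightarrow> bool" where
  "pos_periodic N x \<longleftrightarrow> periodic N x \<and> (\<forall>i. 0 < x i)"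

lemma geom_Q_pos:
  assumes "pos_periodic N x" "pos_periodic N y" "0 < N"
  shows "0 < geom_Q N x y i"
  using assms unfolding geom_Q_def pos_periodic_def
  by (intro sum_pos mult_pos_pos prod_pos) auto

lemma geom_Q_periodic:
  assumes "periodic N x" "periodic N y"
  shows "periodic N (geom_Q N x y)"
proof -
  have "x (i + int N + int j) = x (i + int j)" "y (i + int N + int j) = y (i + int j)" for i j
    using assms periodic_shift_left[of N _ "i + int j"] by (simp_all add: ac_simps)
  then show ?thesis
    unfolding periodic_def geom_Q_def by simp
qed

definition geom_R1 :: "nat \<Rightarrow> (int \<Rightarrow> real) \<Rightarrow> (int \<Rightarrow> real) \<Rightarrow> int \<Rightarrow> real" where
  "geom_R1 N x y i = y i * geom_Q N x y (i - 1) / geom_Q N x y i"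

definition geom_R2 :: "nat \<Rightarrow> (int \<Rightarrow> real) \<Rightarrow> (int \<Rightarrow> real) \<Rightarrow> int \<Rightarrow> real" where
  "geom_R2 N x y i = x i * geom_Q N x y i / geom_Q N x y (i - 1)"

lemma pos_periodic_geom_R:
  assumes "pos_periodic N x" "pos_periodic N y" "0 < N"
  shows "pos_periodic N (geom_R1 N x y)" "pos_periodic N (geom_R2 N x y)"
proof -
  have "periodic N (geom_Q N x y)"
    using assms geom_Q_periodic unfolding pos_periodic_def by blast
  then have "geom_Q N x y (i + int N - 1) = geom_Q N x y (i - 1)" for i
    using periodic_shift_left[of N _ "i - 1"] by (simp add: algebra_simps)
  then show "pos_periodic N (geom_R1 N x y)" "pos_periodic N (geom_R2 N x y)"
    using assms geom_Q_pos[OF assms] \<open>periodic N (geom_Q N x y)\<close>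
    unfolding pos_periodic_def geom_R1_def geom_R2_def periodic_def by simp_all
qed

lemma period_prod_geom_R:
  assumes "pos_periodic N x" "pos_periodic N y" "0 < N"
  shows "period_prod N (geom_R1 N x y) = period_prod N y" "period_prod N (geom_R2 N x y) = period_prod N x"
proof -
  have "(\<Prod>j<N. geom_Q N x y (int j - 1)) = (\<Prod>j<N. geom_Q N x y (int j))"
    using prod.periodic_window[OF geom_Q_periodic, of N x y "-1"] assms
    unfolding pos_periodic_def by simp
  moreover have "(\<Prod>j<N. geom_Q N x y (int j)) \<noteq> 0"
    using geom_Q_pos[OF assms] by (simp add: prod_pos less_imp_neq[symmetric])
  ultimately show "period_prod N (geom_R1 N x y) = period_prod N y" "period_prod N (geom_R2 N x y) = period_prod N x"
    unfolding period_prod_def geom_R1_def geom_R2_def by (simp_all add: prod.distrib prod_dividef)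
qed

lemma geom_R1_difference:
  assumes "pos_periodic N x" "pos_periodic N y" "0 < N"
  shows "x i - geom_R1 N x y i = (period_prod N x - period_prod N y) / geom_Q N x y i"
  using geom_Q_difference[of N x y i] geom_Q_pos[OF assms, of i] assms
  unfolding geom_R1_def pos_periodic_def by (simp add: field_simps)

definition bidiag :: "(int \<Rightarrow> real) \<Rightarrow> (int \<Rightarrow> real) \<Rightarrow> int \<Rightarrow> real" where
  "bidiag a v j = a j * v j + v (j - 1)"

lemma bidiag_geom_R:
  assumes "pos_periodic N x" "pos_periodic N y" "0 < N"
  shows "bidiag y (bidiag x v) = bidiag (geom_R2 N x y) (bidiag (geom_R1 N x y) v)"
proof
  fix j
  let ?P = "geom_Q N x y"
  have pos: "0 < ?P j" "0 < ?P (j - 1)" "0 < ?P (j - 1 - 1)"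
    using geom_Q_pos[OF assms] by auto
  have "x j * ?P j - y j * ?P (j - 1) = x (j - 1) * ?P (j - 1) - y (j - 1) * ?P (j - 1 - 1)"
    using assms geom_Q_difference unfolding pos_periodic_def by metis
  then have "x j * ?P j + y (j - 1) * ?P (j - 1 - 1) = (y j + x (j - 1)) * ?P (j - 1)"
    by (simp add: algebra_simps)
  then have "geom_R2 N x y j + geom_R1 N x y (j - 1) = y j + x (j - 1)"
    unfolding geom_R1_def geom_R2_def using pos by (simp add: field_simps)
  moreover have "geom_R2 N x y j * geom_R1 N x y j = x j * y j"
    unfolding geom_R1_def geom_R2_def using pos by (simp add: field_simps)
  moreover have "bidiag y (bidiag x v) j = x j * y j * v j + (y j + x (j - 1)) * v (j - 1) + v (j - 1 - 1)"
    unfolding bidiag_def by (simp add: algebra_simps)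
  moreover have "bidiag (geom_R2 N x y) (bidiag (geom_R1 N x y) v) j
      = geom_R2 N x y j * geom_R1 N x y j * v j
        + (geom_R2 N x y j + geom_R1 N x y (j - 1)) * v (j - 1) + v (j - 1 - 1)"
    unfolding bidiag_def by (simp add: algebra_simps)
  ultimately show "bidiag y (bidiag x v) j = bidiag (geom_R2 N x y) (bidiag (geom_R1 N x y) v) j"
    by simp
qed

lemma bidiag_zero [simp]: "bidiag a (\<lambda>_. 0) = (\<lambda>_. 0)"
  unfolding bidiag_def by simp

definition bidiag_null :: "(int \<Rightarrow> real) \<Rightarrow> (int \<Rightarrow> real) \<Rightarrow> bool" where
  "bidiag_null a v \<longleftrightarrow> bidiag a v = (\<lambda>_. 0)"

definition quasi_periodic :: "nat \<Rightarrow> real \<Rightarrow> (int \<Rightarrow> real) \<Rightarrow> bool" where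
  "quasi_periodic N \<mu> w \<longleftrightarrow> (\<forall>j. w (j - int N) = \<mu> * w j)"

lemma bidiag_nullD: "bidiag_null a v \<Longrightarrow> v (j - 1) = - a j * v j"
  unfolding bidiag_null_def bidiag_def by (metis add_eq_0_iff mult_minus_left)

lemma bidiag_null_apply: "bidiag_null b v \<Longrightarrow> bidiag a v j = (a j - b j) * v j"
  using bidiag_nullD[of b v j] unfolding bidiag_def by (simp add: algebra_simps)

lemma bidiag_null_nonzero:
  assumes "\<forall>i. 0 < a i" "bidiag_null a v" "v j0 \<noteq> 0"
  shows "v j \<noteq> 0"
proof (induction j rule: int_induct[where k = j0])
  case base
  then show ?case using assms by simp
next
  case (step1 i)
  then show ?case using bidiag_nullD[OF assms(2), of "i + 1"] by auto
next
  case (step2 i)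
  then show ?case using bidiag_nullD[OF assms(2), of i] assms(1) by (metis less_irrefl mult_eq_0_iff neg_equal_0_iff_equal)
qed

lemma bidiag_null_unique:
  assumes "\<forall>i. 0 < a i" "bidiag_null a v" "bidiag_null b v" "v j0 \<noteq> 0"
  shows "a = b"
proof
  fix j
  have "v j \<noteq> 0" by (rule bidiag_null_nonzero[OF assms(1,2,4)])
  then show "a j = b j"
    using bidiag_nullD[OF assms(2), of j] bidiag_nullD[OF assms(3), of j] by simp
qed

lemma bidiag_null_quasi_periodic:
  assumes "periodic N a" "bidiag_null a v"
  shows "quasi_periodic N ((-1) ^ N * period_prod N a) v"
proof -
  have iter: "v i = (-1) ^ m * (\<Prod>t<m. a (i + 1 + int t)) * v (i + int m)" for i m
  proof (induction m)
    case (Suc m)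
    then show ?case
      using bidiag_nullD[OF assms(2), of "i + int m + 1"] by (simp add: algebra_simps)
  qed simp
  show ?thesis
    unfolding quasi_periodic_def period_prod_def
    using iter[of "_ - int N" N] prod.periodic_window[OF assms(1)] by simp
qed

lemma quasi_periodic_bidiag:
  assumes "periodic N a" "quasi_periodic N \<mu> w"
  shows "quasi_periodic N \<mu> (bidiag a w)"
  unfolding quasi_periodic_def
proof
  fix j
  have "w (j - int N - 1) = \<mu> * w (j - 1)"
    using assms(2) unfolding quasi_periodic_def by (metis diff_diff_eq add.commute)
  then show "bidiag a w (j - int N) = \<mu> * bidiag a w j"
    using assms unfolding bidiag_def quasi_periodic_def by (simp add: algebra_simps)
qed

lemma bidiag_null_trivial:
  assumes "periodic N a" "bidiag_null a w" "quasi_periodic N \<mu> w"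
    and "\<mu> \<noteq> (-1) ^ N * period_prod N a"
  shows "w j = 0"
proof (rule ccontr)
  assume "w j \<noteq> 0"
  moreover have "w (j - int N) = (-1) ^ N * period_prod N a * w j"
    using bidiag_null_quasi_periodic[OF assms(1,2)] unfolding quasi_periodic_def by blast
  ultimately show False
    using assms(3,4) unfolding quasi_periodic_def by simp
qed

lemma bidiag_null_exists:
  assumes pos: "\<forall>i. 0 < a i"
  obtains v where "bidiag_null a v" "v 0 = 1"
proof -
  define v where "v j = (if 0 \<le> j then (-1) ^ nat j / (\<Prod>t<nat j. a (1 + int t))
                          else (-1) ^ nat (- j) * (\<Prod>t<nat (- j). a (j + 1 + int t)))" for j
  have "a j * v j + v (j - 1) = 0" for j
  proof (cases "1 \<le> j")
    case True
    define m where "m = nat (j - 1)"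
    have m: "j = int m + 1" using True m_def by simp
    have "0 < (\<Prod>t<m. a (1 + int t))" "0 < a (1 + int m)"
      using pos by (simp_all add: prod_pos)
    moreover have "v j = (-1) ^ Suc m / ((\<Prod>t<m. a (1 + int t)) * a (1 + int m))"
      unfolding v_def using m by (simp add: nat_add_distrib)
    moreover have "v (j - 1) = (-1) ^ m / (\<Prod>t<m. a (1 + int t))"
      unfolding v_def using m by simp
    ultimately show ?thesis
      using m by (simp add: field_simps)
  next
    case False
    define m where "m = nat (- j)"
    have m: "j = - int m" using False m_def by simp
    have "v j = (-1) ^ m * (\<Prod>t<m. a (- int m + 1 + int t))"
      unfolding v_def using m by (cases "m = 0") auto
    moreover have "v (j - 1) = (-1) ^ Suc m * (a j * (\<Prod>t<m. a (- int m + 1 + int t)))"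
    proof -
      have "(\<Prod>t<Suc m. a (- int m + int t)) = a j * (\<Prod>t<m. a (- int m + 1 + int t))"
        unfolding prod.lessThan_Suc_shift using m by (simp add: algebra_simps)
      moreover have "nat (- (j - 1)) = Suc m" "\<not> 0 \<le> j - 1"
        using m by simp_all
      ultimately show ?thesis
        unfolding v_def using m by (simp add: algebra_simps)
    qed
    ultimately show ?thesis
      by (simp add: algebra_simps)
  qed
  then have "bidiag_null a v"
    unfolding bidiag_null_def bidiag_def by auto
  moreover have "v 0 = 1" by (simp add: v_def)
  ultimately show thesis by (rule that)
qed

section \<open>Yang-Baxter relation and energy for the geometric R-matrix\<close>

lemma bidiag_geom_R_triple:
  assumes x: "pos_periodic N x" and y: "pos_periodic N y" and z: "pos_periodic N z" and N: "0 < N"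
  shows "bidiag z (bidiag y (bidiag x v))
      = bidiag (geom_R2 N y z) (bidiag (geom_R2 N x (geom_R1 N y z)) (bidiag (geom_R1 N x (geom_R1 N y z)) v))"
    and "bidiag z (bidiag y (bidiag x v))
      = bidiag (geom_R2 N (geom_R2 N x y) z)
          (bidiag (geom_R2 N (geom_R1 N x y) (geom_R1 N (geom_R2 N x y) z))
            (bidiag (geom_R1 N (geom_R1 N x y) (geom_R1 N (geom_R2 N x y) z)) v))"
proof -
  have z': "pos_periodic N (geom_R1 N y z)"
    using pos_periodic_geom_R(1)[OF y z N] .
  show "bidiag z (bidiag y (bidiag x v))
      = bidiag (geom_R2 N y z) (bidiag (geom_R2 N x (geom_R1 N y z)) (bidiag (geom_R1 N x (geom_R1 N y z)) v))"
    using bidiag_geom_R[OF y z N] bidiag_geom_R[OF x z' N] by simp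
  define x' y' where "x' = geom_R2 N x y" and "y' = geom_R1 N x y"
  have x': "pos_periodic N x'" and y': "pos_periodic N y'"
    unfolding x'_def y'_def using pos_periodic_geom_R(2)[OF x y N] pos_periodic_geom_R(1)[OF x y N] .
  have "bidiag z (bidiag y (bidiag x v)) = bidiag z (bidiag x' (bidiag y' v))"
    unfolding x'_def y'_def using bidiag_geom_R[OF x y N] by simp
  also have "\<dots> = bidiag (geom_R2 N x' z) (bidiag (geom_R1 N x' z) (bidiag y' v))"
    using bidiag_geom_R[OF x' z N] by simp
  also have "\<dots> = bidiag (geom_R2 N x' z) (bidiag (geom_R2 N y' (geom_R1 N x' z)) (bidiag (geom_R1 N y' (geom_R1 N x' z)) v))"
    using bidiag_geom_R[OF y' pos_periodic_geom_R(1)[OF x' z N] N] by simp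
  finally show "bidiag z (bidiag y (bidiag x v))
      = bidiag (geom_R2 N (geom_R2 N x y) z)
          (bidiag (geom_R2 N (geom_R1 N x y) (geom_R1 N (geom_R2 N x y) z))
            (bidiag (geom_R1 N (geom_R1 N x y) (geom_R1 N (geom_R2 N x y) z)) v))"
    unfolding x'_def y'_def .
qed

lemma bidiag_null_of_triple:
  assumes "periodic N a" "periodic N b" "periodic N c" "quasi_periodic N \<mu> v"
    and "bidiag a (bidiag b (bidiag c v)) = (\<lambda>_. 0)"
    and "\<mu> \<noteq> (-1) ^ N * period_prod N a" "\<mu> \<noteq> (-1) ^ N * period_prod N b"
  shows "bidiag_null c v"
proof -
  have qp: "quasi_periodic N \<mu> (bidiag c v)" "quasi_periodic N \<mu> (bidiag b (bidiag c v))"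
    using assms(2-4) quasi_periodic_bidiag by blast+
  have "bidiag b (bidiag c v) = (\<lambda>_. 0)"
    using bidiag_null_trivial[OF assms(1) _ qp(2) assms(6)] assms(5) unfolding bidiag_null_def by blast
  then have "bidiag c v = (\<lambda>_. 0)"
    using bidiag_null_trivial[OF assms(2) _ qp(1) assms(7)] unfolding bidiag_null_def by blast
  then show ?thesis
    unfolding bidiag_null_def .
qed

lemma geom_R1_null_transfer:
  assumes x: "pos_periodic N x" and y: "pos_periodic N y" and z: "pos_periodic N z" and N: "0 < N"
    and zx: "period_prod N z \<noteq> period_prod N x" and zy: "period_prod N z \<noteq> period_prod N y"
    and null: "bidiag_null (geom_R1 N x (geom_R1 N y z)) v"
  shows "bidiag_null (geom_R1 N (geom_R1 N x y) (geom_R1 N (geom_R2 N x y) z)) v"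
proof -
  define x' y' where "x' = geom_R2 N x y" and "y' = geom_R1 N x y"
  have x': "pos_periodic N x'" and y': "pos_periodic N y'"
    unfolding x'_def y'_def using pos_periodic_geom_R(2)[OF x y N] pos_periodic_geom_R(1)[OF x y N] .
  have z': "pos_periodic N (geom_R1 N x' z)"
    using pos_periodic_geom_R(1)[OF x' z N] .
  have zs: "pos_periodic N (geom_R1 N x (geom_R1 N y z))"
    using pos_periodic_geom_R(1)[OF x pos_periodic_geom_R(1)[OF y z N] N] .
  have "quasi_periodic N ((-1) ^ N * period_prod N z) v"
    using bidiag_null_quasi_periodic[of N, OF _ null] zs
      period_prod_geom_R(1)[OF x pos_periodic_geom_R(1)[OF y z N] N] period_prod_geom_R(1)[OF y z N]
    unfolding pos_periodic_def by simp
  moreover have "bidiag (geom_R2 N x' z) (bidiag (geom_R2 N y' (geom_R1 N x' z))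
      (bidiag (geom_R1 N y' (geom_R1 N x' z)) v)) = (\<lambda>_. 0)"
    using bidiag_geom_R_triple[OF x y z N, of v] null unfolding x'_def y'_def bidiag_null_def by simp
  moreover have "period_prod N (geom_R2 N x' z) = period_prod N x"
      "period_prod N (geom_R2 N y' (geom_R1 N x' z)) = period_prod N y"
    using period_prod_geom_R(2)[OF x' z N] period_prod_geom_R(2)[OF y' z' N]
      period_prod_geom_R(2)[OF x y N] period_prod_geom_R(1)[OF x y N]
    unfolding x'_def y'_def by simp_all
  ultimately have "bidiag_null (geom_R1 N y' (geom_R1 N x' z)) v"
    using zx zy pos_periodic_geom_R(2)[OF x' z N] pos_periodic_geom_R[OF y' z' N]
    unfolding pos_periodic_def by (intro bidiag_null_of_triple) auto
  then show ?thesis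
    unfolding x'_def y'_def .
qed

lemma geom_yang_baxter:
  assumes "pos_periodic N x" "pos_periodic N y" "pos_periodic N z" "0 < N"
    and "period_prod N z \<noteq> period_prod N x" "period_prod N z \<noteq> period_prod N y"
  shows "geom_R1 N x (geom_R1 N y z) = geom_R1 N (geom_R1 N x y) (geom_R1 N (geom_R2 N x y) z)"
proof -
  have pos: "pos_periodic N (geom_R1 N x (geom_R1 N y z))"
    using assms(1-4) by (intro pos_periodic_geom_R)
  then obtain v where "bidiag_null (geom_R1 N x (geom_R1 N y z)) v" "v 0 = 1"
    using bidiag_null_exists unfolding pos_periodic_def by blast
  with geom_R1_null_transfer[OF assms] show ?thesis
    using bidiag_null_unique[of _ v _ 0] pos unfolding pos_periodic_def by simp
qed

lemma geom_R1_difference_product: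
  assumes x: "pos_periodic N x" and y: "pos_periodic N y" and z: "pos_periodic N z" and N: "0 < N"
    and "period_prod N z \<noteq> period_prod N x" "period_prod N z \<noteq> period_prod N y"
  shows "(y j - geom_R1 N y z j) * (x j - geom_R1 N x (geom_R1 N y z) j)
       = (geom_R2 N x y j - geom_R1 N (geom_R2 N x y) z j)
         * (geom_R1 N x y j - geom_R1 N (geom_R1 N x y) (geom_R1 N (geom_R2 N x y) z) j)"
proof -
  define z' x' y' where "z' = geom_R1 N y z" and "x' = geom_R2 N x y" and "y' = geom_R1 N x y"
  define z'' where "z'' = geom_R1 N x' z"
  have z': "pos_periodic N z'" and y': "pos_periodic N y'"
    unfolding z'_def y'_def using pos_periodic_geom_R(1)[OF y z N] pos_periodic_geom_R(1)[OF x y N] .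
  have z'': "pos_periodic N z''" and zs: "pos_periodic N (geom_R1 N x z')"
    unfolding z''_def x'_def using pos_periodic_geom_R(1)[OF pos_periodic_geom_R(2)[OF x y N] z N]
      pos_periodic_geom_R(1)[OF x z' N] .
  obtain v where null: "bidiag_null (geom_R1 N x z') v" and "v 0 = 1"
    using bidiag_null_exists zs unfolding pos_periodic_def by blast
  then have null': "bidiag_null (geom_R1 N y' z'') v"
    using geom_R1_null_transfer[OF assms] unfolding z'_def x'_def y'_def z''_def by blast
  have "bidiag_null z' (bidiag x v)"
    using bidiag_geom_R[OF x z' N, of v] null unfolding bidiag_null_def by simp
  then have "bidiag y (bidiag x v) j = (y j - z' j) * ((x j - geom_R1 N x z' j) * v j)"
    using bidiag_null_apply[OF null] by (simp add: bidiag_null_apply)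
  moreover have "bidiag_null z'' (bidiag y' v)"
    using bidiag_geom_R[OF y' z'' N, of v] null' unfolding bidiag_null_def by simp
  then have "bidiag y (bidiag x v) j = (x' j - z'' j) * ((y' j - geom_R1 N y' z'' j) * v j)"
    using bidiag_geom_R[OF x y N] bidiag_null_apply[OF null']
    unfolding x'_def y'_def by (simp add: bidiag_null_apply)
  moreover have "v j \<noteq> 0"
    using bidiag_null_nonzero[OF _ null, of 0] \<open>v 0 = 1\<close> zs unfolding pos_periodic_def by auto
  ultimately show ?thesis
    unfolding z'_def x'_def y'_def z''_def by simp
qed

lemma geom_energy:
  assumes x: "pos_periodic N x" and y: "pos_periodic N y" and z: "pos_periodic N z" and N: "0 < N"
    and zx: "period_prod N z \<noteq> period_prod N x" and zy: "period_prod N z \<noteq> period_prod N y"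
  shows "geom_Q N y z j * geom_Q N x (geom_R1 N y z) j
       = geom_Q N (geom_R2 N x y) z j * geom_Q N (geom_R1 N x y) (geom_R1 N (geom_R2 N x y) z) j"
proof -
  define z' x' y' where "z' = geom_R1 N y z" and "x' = geom_R2 N x y" and "y' = geom_R1 N x y"
  define z'' where "z'' = geom_R1 N x' z"
  have z': "pos_periodic N z'" and x': "pos_periodic N x'" and y': "pos_periodic N y'"
    unfolding z'_def x'_def y'_def using pos_periodic_geom_R(1)[OF y z N] pos_periodic_geom_R(2,1)[OF x y N] .
  have z'': "pos_periodic N z''"
    unfolding z''_def using pos_periodic_geom_R(1)[OF x' z N] .
  have "period_prod N z' = period_prod N z" "period_prod N x' = period_prod N x"
      "period_prod N y' = period_prod N y" "period_prod N z'' = period_prod N z"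
    using period_prod_geom_R(1)[OF y z N] period_prod_geom_R(2,1)[OF x y N] period_prod_geom_R(1)[OF x' z N]
    unfolding z'_def x'_def y'_def z''_def by simp_all
  then have "(period_prod N x - period_prod N z) * (period_prod N y - period_prod N z)
        / (geom_Q N y z j * geom_Q N x z' j)
      = (period_prod N x - period_prod N z) * (period_prod N y - period_prod N z)
        / (geom_Q N x' z j * geom_Q N y' z'' j)"
    using geom_R1_difference_product[OF assms, of j]
      geom_R1_difference[OF y z N] geom_R1_difference[OF x z' N]
      geom_R1_difference[OF x' z N] geom_R1_difference[OF y' z'' N]
    unfolding z'_def z''_def x'_def y'_def by (simp add: mult.commute)
  then show ?thesis
    using zx zy unfolding z'_def x'_def y'_def z''_def divide_cancel_left by simp
qed

section \<open>Tropicalization\<close>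

lemma tendsto_exp_neg_at_top:
  assumes "(d::real) < 0"
  shows "((\<lambda>s. exp (s * d)) \<longlongrightarrow> 0) at_top"
proof -
  have "filterlim (\<lambda>s. d * s) at_bot at_top"
    by (rule filterlim_tendsto_neg_mult_at_bot[OF tendsto_const assms filterlim_ident])
  then have "filterlim (\<lambda>s. s * d) at_bot at_top"
    by (simp add: mult.commute)
  then show ?thesis by (rule filterlim_compose[OF exp_at_bot])
qed

(* F s is asymptotic to c * exp (- s * a) with c > 0; sums tropicalize to min, products to +. *)
definition has_trop_exp :: "(real \<Rightarrow> real) \<Rightarrow> real \<Rightarrow> bool" where
  "has_trop_exp F a \<longleftrightarrow> (\<exists>c>0. ((\<lambda>s. F s * exp (s * a)) \<longlongrightarrow> c) at_top)"

lemma has_trop_exp_mult: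
  assumes "has_trop_exp F a" "has_trop_exp G b"
  shows "has_trop_exp (\<lambda>s. F s * G s) (a + b)"
proof -
  obtain c d where "0 < c" "0 < d" and F: "((\<lambda>s. F s * exp (s * a)) \<longlongrightarrow> c) at_top"
      and G: "((\<lambda>s. G s * exp (s * b)) \<longlongrightarrow> d) at_top"
    using assms unfolding has_trop_exp_def by blast
  have "(\<lambda>s. (F s * exp (s * a)) * (G s * exp (s * b))) = (\<lambda>s. F s * G s * exp (s * (a + b)))"
    by (simp add: algebra_simps exp_add[symmetric])
  then have "((\<lambda>s. F s * G s * exp (s * (a + b))) \<longlongrightarrow> c * d) at_top"
    using tendsto_mult[OF F G] by simp
  then show ?thesis
    unfolding has_trop_exp_def using \<open>0 < c\<close> \<open>0 < d\<close> by (blast intro: mult_pos_pos)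
qed

lemma has_trop_exp_divide:
  assumes "has_trop_exp F a" "has_trop_exp G b"
  shows "has_trop_exp (\<lambda>s. F s / G s) (a - b)"
proof -
  obtain c d where "0 < c" "0 < d" and F: "((\<lambda>s. F s * exp (s * a)) \<longlongrightarrow> c) at_top"
      and G: "((\<lambda>s. G s * exp (s * b)) \<longlongrightarrow> d) at_top"
    using assms unfolding has_trop_exp_def by blast
  have "(\<lambda>s. (F s * exp (s * a)) / (G s * exp (s * b))) = (\<lambda>s. F s / G s * exp (s * (a - b)))"
    by (simp add: right_diff_distrib exp_diff)
  then have "((\<lambda>s. F s / G s * exp (s * (a - b))) \<longlongrightarrow> c / d) at_top"
    using tendsto_divide[OF F G] \<open>0 < d\<close> by simp
  then show ?thesis
    unfolding has_trop_exp_def using \<open>0 < c\<close> \<open>0 < d\<close> by (blast intro: divide_pos_pos)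
qed

lemma has_trop_exp_add:
  assumes F: "has_trop_exp F a" and G: "has_trop_exp G b"
  shows "has_trop_exp (\<lambda>s. F s + G s) (min a b)"
proof -
  have dominant: "has_trop_exp (\<lambda>s. F s + G s) a"
    if F: "has_trop_exp F a" and G: "has_trop_exp G b" and "a < b" for F G a b
  proof -
    obtain c d where "0 < c" and F: "((\<lambda>s. F s * exp (s * a)) \<longlongrightarrow> c) at_top"
        and G: "((\<lambda>s. G s * exp (s * b)) \<longlongrightarrow> d) at_top"
      using F G unfolding has_trop_exp_def by blast
    have "((\<lambda>s. exp (s * (a - b))) \<longlongrightarrow> 0) at_top"
      using \<open>a < b\<close> by (intro tendsto_exp_neg_at_top) simp
    then have "((\<lambda>s. F s * exp (s * a) + (G s * exp (s * b)) * exp (s * (a - b))) \<longlongrightarrow> c + d * 0) at_top"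
      using F G by (intro tendsto_add tendsto_mult)
    moreover have "(\<lambda>s. F s * exp (s * a) + (G s * exp (s * b)) * exp (s * (a - b)))
        = (\<lambda>s. (F s + G s) * exp (s * a))"
      by (simp add: algebra_simps exp_add[symmetric])
    ultimately show ?thesis
      unfolding has_trop_exp_def using \<open>0 < c\<close> by auto
  qed
  show ?thesis
  proof (cases a b rule: linorder_cases)
    case less
    then show ?thesis using dominant[OF F G] by simp
  next
    case greater
    then show ?thesis using dominant[OF G F] by (simp add: add.commute)
  next
    case equal
    obtain c d where "0 < c" "0 < d" and F: "((\<lambda>s. F s * exp (s * a)) \<longlongrightarrow> c) at_top"
        and G: "((\<lambda>s. G s * exp (s * b)) \<longlongrightarrow> d) at_top"
      using F G unfolding has_trop_exp_def by blast
    have "((\<lambda>s. (F s + G s) * exp (s * a)) \<longlongrightarrow> c + d) at_top"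
      using tendsto_add[OF F G] equal by (simp add: algebra_simps)
    then show ?thesis
      unfolding has_trop_exp_def using \<open>0 < c\<close> \<open>0 < d\<close> equal by (auto intro!: exI[of _ "c + d"])
  qed
qed

lemma has_trop_exp_sum:
  assumes "finite K" "K \<noteq> {}" "\<forall>k\<in>K. has_trop_exp (F k) (a k)"
  shows "has_trop_exp (\<lambda>s. \<Sum>k\<in>K. F k s) (Min (a ` K))"
  using assms
proof (induction K rule: finite_ne_induct)
  case (insert x K)
  then show ?case
    using has_trop_exp_add[of "F x" "a x" "\<lambda>s. \<Sum>k\<in>K. F k s"] by simp
qed simp

lemma has_trop_exp_prod:
  assumes "finite K" "\<forall>k\<in>K. has_trop_exp (F k) (a k)"
  shows "has_trop_exp (\<lambda>s. \<Prod>k\<in>K. F k s) (\<Sum>k\<in>K. a k)"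
  using assms
proof (induction K rule: finite_induct)
  case empty
  show ?case unfolding has_trop_exp_def by (intro exI[of _ 1]) auto
next
  case (insert x K)
  then show ?case
    using has_trop_exp_mult[of "F x" "a x" "\<lambda>s. \<Prod>k\<in>K. F k s"] by simp
qed

lemma has_trop_exp_unique:
  assumes "has_trop_exp F a" "has_trop_exp G b" "eventually (\<lambda>s. F s = G s) at_top"
  shows "a = b"
proof -
  have not_less: "\<not> a < b"
    if F: "has_trop_exp F a" and G: "has_trop_exp G b" and eq: "eventually (\<lambda>s. F s = G s) at_top"
    for F G a b
  proof
    assume "a < b"
    obtain c d where "0 < c" and F: "((\<lambda>s. F s * exp (s * a)) \<longlongrightarrow> c) at_top"
        and G: "((\<lambda>s. G s * exp (s * b)) \<longlongrightarrow> d) at_top"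
      using F G unfolding has_trop_exp_def by blast
    have "((\<lambda>s. exp (s * (a - b))) \<longlongrightarrow> 0) at_top"
      using \<open>a < b\<close> by (intro tendsto_exp_neg_at_top) simp
    from tendsto_mult[OF G this]
    have "((\<lambda>s. (G s * exp (s * b)) * exp (s * (a - b))) \<longlongrightarrow> 0) at_top"
      by simp
    moreover have "eventually (\<lambda>s. (G s * exp (s * b)) * exp (s * (a - b)) = F s * exp (s * a)) at_top"
      using eq by eventually_elim (simp add: algebra_simps exp_add[symmetric])
    ultimately have "((\<lambda>s. F s * exp (s * a)) \<longlongrightarrow> 0) at_top"
      by (rule Lim_transform_eventually)
    with F have "c = 0"
      using tendsto_unique[OF trivial_limit_at_top_linorder] by blast
    with \<open>0 < c\<close> show False
      by simp
  qed
  have "eventually (\<lambda>s. G s = F s) at_top"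
    using assms(3) by (simp add: eq_commute)
  then show ?thesis
    using not_less[OF assms] not_less[OF assms(2,1)] by simp
qed

definition trop_Q_term :: "nat \<Rightarrow> (int \<Rightarrow> int) \<Rightarrow> (int \<Rightarrow> int) \<Rightarrow> int \<Rightarrow> nat \<Rightarrow> int" where
  "trop_Q_term N a b i k = (\<Sum>j\<in>{1..<k}. a (i + int j)) + (\<Sum>j\<in>{k<..N}. b (i + int j))"

definition trop_Q :: "nat \<Rightarrow> (int \<Rightarrow> int) \<Rightarrow> (int \<Rightarrow> int) \<Rightarrow> int \<Rightarrow> int" where
  "trop_Q N a b i = Min (trop_Q_term N a b i ` {1..N})"

definition trop_R1 :: "nat \<Rightarrow> (int \<Rightarrow> int) \<Rightarrow> (int \<Rightarrow> int) \<Rightarrow> int \<Rightarrow> int" where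
  "trop_R1 N a b i = b i + trop_Q N a b (i - 1) - trop_Q N a b i"

definition trop_R2 :: "nat \<Rightarrow> (int \<Rightarrow> int) \<Rightarrow> (int \<Rightarrow> int) \<Rightarrow> int \<Rightarrow> int" where
  "trop_R2 N a b i = a i + trop_Q N a b i - trop_Q N a b (i - 1)"

lemma trop_Q_periodic:
  assumes "periodic N a" "periodic N b"
  shows "periodic N (trop_Q N a b)"
proof -
  have "a (i + int N + int j) = a (i + int j)" "b (i + int N + int j) = b (i + int j)" for i j
    using assms periodic_shift_left[of N _ "i + int j"] by (simp_all add: ac_simps)
  then show ?thesis
    unfolding periodic_def trop_Q_def trop_Q_term_def by simp
qed

lemma trop_R_periodic:
  assumes "periodic N a" "periodic N b"
  shows "periodic N (trop_R1 N a b)" "periodic N (trop_R2 N a b)"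
  using assms periodic_shift_left[OF trop_Q_periodic[OF assms]]
  unfolding periodic_def trop_R1_def trop_R2_def by (metis diff_add_eq)+

lemma sum_trop_R1:
  assumes "periodic N a" "periodic N b"
  shows "(\<Sum>j<N. trop_R1 N a b (int j)) = (\<Sum>j<N. b (int j))"
  using sum.periodic_window[OF trop_Q_periodic[OF assms], of "-1"]
  unfolding trop_R1_def by (simp add: sum.distrib sum_subtractf)

lemma sum_trop_R2:
  assumes "periodic N a" "periodic N b"
  shows "(\<Sum>j<N. trop_R2 N a b (int j)) = (\<Sum>j<N. a (int j))"
  using sum.periodic_window[OF trop_Q_periodic[OF assms], of "-1"]
  unfolding trop_R2_def by (simp add: sum.distrib sum_subtractf)

lemma trop_Q_term_shift:
  assumes b: "periodic N b" and k: "k \<in> {1..N}"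
  shows "b i + trop_Q_term N a b (i - 1) k
       = (if k = 1 then b (i + 1) + trop_Q_term N a b i 1 else a i + trop_Q_term N a b i (k - 1))"
proof (cases "k = 1")
  case True
  have "b i + (\<Sum>j\<in>{Suc 0<..N}. b (i - 1 + int j)) = (\<Sum>j\<in>{0<..N}. b (i + int j))"
    using sum.periodic_tail_shift[OF b] k by simp
  also have "\<dots> = b (i + 1) + trop_Q_term N a b i 1"
    unfolding trop_Q_term_def using k by (simp add: atLeastSucAtMost_greaterThanAtMost[symmetric] sum.head)
  finally show ?thesis
    unfolding trop_Q_term_def True by simp
next
  case False
  then obtain m where m: "k = Suc (Suc m)" "Suc m < N"
    using k by (cases k; cases "k - 1") auto
  have "(\<Sum>j\<in>{1..<k}. a (i - 1 + int j)) = (\<Sum>j<Suc m. a (i + int j))"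
    unfolding m(1) sum.atLeast1_lessThan_Suc_int_shift by simp
  also have "\<dots> = a i + (\<Sum>j\<in>{1..<Suc m}. a (i + int j))"
    by (rule sum.lessThan_Suc_int_shift)
  finally have "(\<Sum>j\<in>{1..<k}. a (i - 1 + int j)) = a i + (\<Sum>j\<in>{1..<Suc m}. a (i + int j))" .
  moreover have "b i + (\<Sum>j\<in>{k<..N}. b (i - 1 + int j)) = (\<Sum>j\<in>{Suc m<..N}. b (i + int j))"
    unfolding m(1) by (rule sum.periodic_tail_shift[OF b m(2)])
  ultimately show ?thesis
    unfolding trop_Q_term_def using m(1) by simp
qed

lemma trop_Q_le_shift:
  assumes b: "periodic N b" and N: "0 < N" and nonneg: "\<forall>i. 0 \<le> a i" "\<forall>i. 0 \<le> b i"
  shows "trop_Q N a b i \<le> b i + trop_Q N a b (i - 1)"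
proof -
  have "Min (trop_Q_term N a b (i - 1) ` {1..N}) \<in> trop_Q_term N a b (i - 1) ` {1..N}"
    using N by (intro Min_in) auto
  then obtain k where k: "k \<in> {1..N}" "trop_Q N a b (i - 1) = trop_Q_term N a b (i - 1) k"
    unfolding trop_Q_def by blast
  have le: "trop_Q N a b i \<le> trop_Q_term N a b i k'" if "k' \<in> {1..N}" for k'
    unfolding trop_Q_def using that by simp
  have "trop_Q N a b i \<le> trop_Q_term N a b i (if k = 1 then 1 else k - 1)"
    using k(1) N by (auto intro!: le)
  then show ?thesis
    using trop_Q_term_shift[OF b k(1), of i a] k(2) nonneg by (auto simp: add_increasing split: if_splits)
qed

lemma has_trop_exp_geom_Q:
  assumes "\<forall>i. has_trop_exp (\<lambda>s. X s i) (a i)" "\<forall>i. has_trop_exp (\<lambda>s. Y s i) (b i)" "0 < N"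
  shows "has_trop_exp (\<lambda>s. geom_Q N (X s) (Y s) i) (trop_Q N a b i)"
proof -
  let ?f = "trop_Q_term N a b i"
  have "has_trop_exp (\<lambda>s. geom_Q N (X s) (Y s) i) (Min ((\<lambda>k. real_of_int (?f k)) ` {1..N}))"
    unfolding geom_Q_def
  proof (intro has_trop_exp_sum ballI)
    fix k
    have "has_trop_exp (\<lambda>s. (\<Prod>j\<in>{1..<k}. X s (i + int j)) * (\<Prod>j\<in>{k<..N}. Y s (i + int j)))
        ((\<Sum>j\<in>{1..<k}. real_of_int (a (i + int j))) + (\<Sum>j\<in>{k<..N}. real_of_int (b (i + int j))))"
      using assms by (intro has_trop_exp_mult has_trop_exp_prod) auto
    then show "has_trop_exp (\<lambda>s. (\<Prod>j\<in>{1..<k}. X s (i + int j)) * (\<Prod>j\<in>{k<..N}. Y s (i + int j)))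
        (real_of_int (?f k))"
      unfolding trop_Q_term_def by simp
  qed (use assms in auto)
  moreover have "Min ((\<lambda>k. real_of_int (?f k)) ` {1..N}) = trop_Q N a b i"
    unfolding trop_Q_def using assms(3)
    by (subst mono_Min_commute[where f = real_of_int]) (auto simp: mono_def image_image)
  ultimately show ?thesis
    by simp
qed

lemma has_trop_exp_geom_R1:
  assumes "\<forall>i. has_trop_exp (\<lambda>s. X s i) (a i)" "\<forall>i. has_trop_exp (\<lambda>s. Y s i) (b i)" "0 < N"
  shows "\<forall>i. has_trop_exp (\<lambda>s. geom_R1 N (X s) (Y s) i) (trop_R1 N a b i)"
  unfolding geom_R1_def trop_R1_def of_int_diff of_int_add using assms
  by (intro allI has_trop_exp_divide has_trop_exp_mult has_trop_exp_geom_Q) auto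

lemma has_trop_exp_geom_R2:
  assumes "\<forall>i. has_trop_exp (\<lambda>s. X s i) (a i)" "\<forall>i. has_trop_exp (\<lambda>s. Y s i) (b i)" "0 < N"
  shows "\<forall>i. has_trop_exp (\<lambda>s. geom_R2 N (X s) (Y s) i) (trop_R2 N a b i)"
  unfolding geom_R2_def trop_R2_def of_int_diff of_int_add using assms
  by (intro allI has_trop_exp_divide has_trop_exp_mult has_trop_exp_geom_Q) auto

definition lift :: "real \<Rightarrow> (int \<Rightarrow> int) \<Rightarrow> real \<Rightarrow> int \<Rightarrow> real" where
  "lift C a s j = C * exp (- (s * a j))"

lemma pos_periodic_lift: "periodic N a \<Longrightarrow> 0 < C \<Longrightarrow> pos_periodic N (lift C a s)"
  unfolding pos_periodic_def periodic_def lift_def by simp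

lemma has_trop_exp_lift:
  assumes "0 < C"
  shows "has_trop_exp (\<lambda>s. lift C a s j) (a j)"
proof -
  have "(\<lambda>s. lift C a s j * exp (s * a j)) = (\<lambda>s. C)"
    unfolding lift_def by (simp add: mult.assoc exp_add[symmetric])
  then show ?thesis
    unfolding has_trop_exp_def using assms by auto
qed

(* The factor 2 in the lift of c makes the distinctness hypotheses of geom_yang_baxter and
   geom_energy hold for large s. *)
lemma eventually_period_prod_lift_ne:
  assumes "0 < N"
  shows "eventually (\<lambda>s. period_prod N (lift 2 c s) \<noteq> period_prod N (lift 1 a s)) at_top"
proof -
  define A C where "A = (\<Sum>j<N. real_of_int (a (int j)))" and "C = (\<Sum>j<N. real_of_int (c (int j)))"
  have prod: "period_prod N (lift K f s) = K ^ N * exp (- (s * (\<Sum>j<N. real_of_int (f (int j)))))"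
    for K f s
    unfolding period_prod_def lift_def by (simp add: prod.distrib exp_sum[symmetric] sum_distrib_left sum_negf)
  have ne: "2 ^ N * exp (- (s * C)) \<noteq> exp (- (s * A))" if "\<bar>real N * ln 2 / (C - A)\<bar> < s" for s
  proof
    assume "2 ^ N * exp (- (s * C)) = exp (- (s * A))"
    moreover have "2 ^ N * exp (- (s * C)) = exp (real N * ln 2 - s * C)"
      by (simp add: exp_diff exp_of_nat_mult exp_minus divide_inverse)
    ultimately have eq: "s * (C - A) = real N * ln 2"
      by (simp add: algebra_simps)
    show False
    proof (cases "C = A")
      case True
      then show False using eq assms by simp
    next
      case False
      then have "s = real N * ln 2 / (C - A)"
        using eq by (simp add: field_simps)
      then show False
        using that abs_ge_self[of "real N * ln 2 / (C - A)"] by linarith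
    qed
  qed
  have "eventually (\<lambda>s. 2 ^ N * exp (- (s * C)) \<noteq> exp (- (s * A))) at_top"
    using eventually_gt_at_top by (rule eventually_mono) (rule ne)
  then show ?thesis
    unfolding prod A_def C_def by simp
qed

lemma trop_yang_baxter:
  assumes "periodic N a" "periodic N b" "periodic N c" and N: "0 < N"
  shows "trop_R1 N a (trop_R1 N b c) = trop_R1 N (trop_R1 N a b) (trop_R1 N (trop_R2 N a b) c)"
proof
  fix i
  let ?X = "lift 1 a" and ?Y = "lift 1 b" and ?Z = "lift 2 c"
  have lifts: "\<forall>j. has_trop_exp (\<lambda>s. ?X s j) (a j)" "\<forall>j. has_trop_exp (\<lambda>s. ?Y s j) (b j)"
      "\<forall>j. has_trop_exp (\<lambda>s. ?Z s j) (c j)"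
    by (simp_all add: has_trop_exp_lift)
  have "eventually (\<lambda>s. geom_R1 N (?X s) (geom_R1 N (?Y s) (?Z s)) i
      = geom_R1 N (geom_R1 N (?X s) (?Y s)) (geom_R1 N (geom_R2 N (?X s) (?Y s)) (?Z s)) i) at_top"
    using eventually_period_prod_lift_ne[OF N, of c a] eventually_period_prod_lift_ne[OF N, of c b]
  proof eventually_elim
    case (elim s)
    then show ?case
      using geom_yang_baxter[OF pos_periodic_lift pos_periodic_lift pos_periodic_lift N] assms by simp
  qed
  moreover have "has_trop_exp (\<lambda>s. geom_R1 N (?X s) (geom_R1 N (?Y s) (?Z s)) i)
      (trop_R1 N a (trop_R1 N b c) i)"
    using has_trop_exp_geom_R1[OF lifts(1) has_trop_exp_geom_R1[OF lifts(2,3) N] N] by blast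
  moreover have "has_trop_exp (\<lambda>s. geom_R1 N (geom_R1 N (?X s) (?Y s)) (geom_R1 N (geom_R2 N (?X s) (?Y s)) (?Z s)) i)
      (trop_R1 N (trop_R1 N a b) (trop_R1 N (trop_R2 N a b) c) i)"
    using has_trop_exp_geom_R1[OF has_trop_exp_geom_R1[OF lifts(1,2) N]
        has_trop_exp_geom_R1[OF has_trop_exp_geom_R2[OF lifts(1,2) N] lifts(3) N] N] by blast
  ultimately have "real_of_int (trop_R1 N a (trop_R1 N b c) i)
      = real_of_int (trop_R1 N (trop_R1 N a b) (trop_R1 N (trop_R2 N a b) c) i)"
    using has_trop_exp_unique by blast
  then show "trop_R1 N a (trop_R1 N b c) i = trop_R1 N (trop_R1 N a b) (trop_R1 N (trop_R2 N a b) c) i"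
    by simp
qed

lemma trop_energy:
  assumes "periodic N a" "periodic N b" "periodic N c" and N: "0 < N"
  shows "trop_Q N b c i + trop_Q N a (trop_R1 N b c) i
       = trop_Q N (trop_R2 N a b) c i + trop_Q N (trop_R1 N a b) (trop_R1 N (trop_R2 N a b) c) i"
proof -
  let ?X = "lift 1 a" and ?Y = "lift 1 b" and ?Z = "lift 2 c"
  have lifts: "\<forall>j. has_trop_exp (\<lambda>s. ?X s j) (a j)" "\<forall>j. has_trop_exp (\<lambda>s. ?Y s j) (b j)"
      "\<forall>j. has_trop_exp (\<lambda>s. ?Z s j) (c j)"
    by (simp_all add: has_trop_exp_lift)
  have "eventually (\<lambda>s. geom_Q N (?Y s) (?Z s) i * geom_Q N (?X s) (geom_R1 N (?Y s) (?Z s)) i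
      = geom_Q N (geom_R2 N (?X s) (?Y s)) (?Z s) i
        * geom_Q N (geom_R1 N (?X s) (?Y s)) (geom_R1 N (geom_R2 N (?X s) (?Y s)) (?Z s)) i) at_top"
    using eventually_period_prod_lift_ne[OF N, of c a] eventually_period_prod_lift_ne[OF N, of c b]
  proof eventually_elim
    case (elim s)
    then show ?case
      using geom_energy[OF pos_periodic_lift pos_periodic_lift pos_periodic_lift N] assms by simp
  qed
  moreover have "has_trop_exp (\<lambda>s. geom_Q N (?Y s) (?Z s) i * geom_Q N (?X s) (geom_R1 N (?Y s) (?Z s)) i)
      (trop_Q N b c i + trop_Q N a (trop_R1 N b c) i)"
    using has_trop_exp_mult[OF has_trop_exp_geom_Q[OF lifts(2,3) N]
        has_trop_exp_geom_Q[OF lifts(1) has_trop_exp_geom_R1[OF lifts(2,3) N] N]] by simp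
  moreover have "has_trop_exp (\<lambda>s. geom_Q N (geom_R2 N (?X s) (?Y s)) (?Z s) i
        * geom_Q N (geom_R1 N (?X s) (?Y s)) (geom_R1 N (geom_R2 N (?X s) (?Y s)) (?Z s)) i)
      (trop_Q N (trop_R2 N a b) c i + trop_Q N (trop_R1 N a b) (trop_R1 N (trop_R2 N a b) c) i)"
    using has_trop_exp_mult[OF has_trop_exp_geom_Q[OF has_trop_exp_geom_R2[OF lifts(1,2) N] lifts(3) N]
        has_trop_exp_geom_Q[OF has_trop_exp_geom_R1[OF lifts(1,2) N]
          has_trop_exp_geom_R1[OF has_trop_exp_geom_R2[OF lifts(1,2) N] lifts(3) N] N]] by simp
  ultimately have "real_of_int (trop_Q N b c i + trop_Q N a (trop_R1 N b c) i)
      = real_of_int (trop_Q N (trop_R2 N a b) c i + trop_Q N (trop_R1 N a b) (trop_R1 N (trop_R2 N a b) c) i)"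
    using has_trop_exp_unique by blast
  then show ?thesis
    by linarith
qed

section \<open>The combinatorial R-matrix\<close>

lemma periodic_comp: "periodic (n + 1) (comp n x)"
  unfolding periodic_def comp_def
proof
  fix i
  have "(i + int (n + 1) - 1) mod int (n + 1) = (i - 1) mod int (n + 1)"
    using mod_add_self2[of "i - 1" "int (n + 1)"] by (simp add: algebra_simps)
  then show "x ! nat ((i + int (n + 1) - 1) mod int (n + 1)) = x ! nat ((i - 1) mod int (n + 1))"
    by simp
qed

lemma comp_map_upt:
  assumes "periodic (n + 1) f"
  shows "comp n (map (\<lambda>i. f (int i)) [1..<n + 2]) = f"
proof
  fix i
  define r where "r = (i - 1) mod int (n + 1)"
  have r: "0 \<le> r" "r < int (n + 1)"
    unfolding r_def by simp_all
  then have "nat r < length [1..<n + 2]"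
    by (simp add: nat_less_iff)
  then have "comp n (map (\<lambda>i. f (int i)) [1..<n + 2]) i = f (int ([1..<n + 2] ! nat r))"
    unfolding comp_def r_def[symmetric] by (rule nth_map)
  also have "[1..<n + 2] ! nat r = 1 + nat r"
    using r by (subst nth_upt) auto
  also have "int (1 + nat r) = r + 1"
    using r by simp
  also have "\<dots> = i + int (n + 1) * (- ((i - 1) div int (n + 1)))"
    unfolding r_def by (simp add: algebra_simps minus_div_mult_eq_mod[symmetric])
  also have "f \<dots> = f i"
    by (rule periodic_add_multiple[OF assms])
  finally show "comp n (map (\<lambda>i. f (int i)) [1..<n + 2]) i = f i" .
qed

lemma Q_eq_trop_Q: "Q n i x y = trop_Q (n + 1) (comp n x) (comp n y) i"
  unfolding Q_def trop_Q_def trop_Q_term_def by simp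

lemma R_eq_trop_R:
  "R n x y = (map (\<lambda>i. trop_R1 (n + 1) (comp n x) (comp n y) (int i)) [1..<n + 2],
              map (\<lambda>i. trop_R2 (n + 1) (comp n x) (comp n y) (int i)) [1..<n + 2])"
  unfolding R_def trop_R1_def trop_R2_def Q_eq_trop_Q by simp

lemma comp_R_fst: "comp n (fst (R n x y)) = trop_R1 (n + 1) (comp n x) (comp n y)"
  unfolding R_eq_trop_R fst_conv by (intro comp_map_upt trop_R_periodic(1) periodic_comp)

lemma comp_R_snd: "comp n (snd (R n x y)) = trop_R2 (n + 1) (comp n x) (comp n y)"
  unfolding R_eq_trop_R snd_conv by (intro comp_map_upt trop_R_periodic(2) periodic_comp)

lemma R_yang_baxter:
  "fst (R n x (fst (R n y z))) = fst (R n (fst (R n x y)) (fst (R n (snd (R n x y)) z)))"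
  using trop_yang_baxter[OF periodic_comp periodic_comp periodic_comp, of n x y z]
  by (subst (1 2) R_eq_trop_R) (simp add: comp_R_fst comp_R_snd)

lemma Q_energy:
  "Q n i y z + Q n i x (fst (R n y z))
     = Q n i (snd (R n x y)) z + Q n i (fst (R n x y)) (fst (R n (snd (R n x y)) z))"
  unfolding Q_eq_trop_Q comp_R_fst comp_R_snd
  by (rule trop_energy[OF periodic_comp periodic_comp periodic_comp]) simp

lemma comp_nth: "1 \<le> j \<Longrightarrow> j \<le> n + 1 \<Longrightarrow> comp n x (int j) = x ! (j - 1)"
  unfolding comp_def by (simp add: nat_diff_distrib)

lemma wt_eq_sum_comp:
  assumes "length x = n + 1"
  shows "wt x = (\<Sum>j\<in>{1..n + 1}. comp n x (int j))"
proof -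
  have "wt x = (\<Sum>k<n + 1. x ! k)"
    unfolding wt_def sum_list_sum_nth assms atLeast0LessThan ..
  also have "\<dots> = (\<Sum>k<n + 1. comp n x (int (Suc k)))"
    using comp_nth[of "Suc _" n x] by (intro sum.cong) simp_all
  also have "\<dots> = (\<Sum>j\<in>{1..n + 1}. comp n x (int j))"
    by (simp only: One_nat_def sum.atLeast1_atMost_eq)
  finally show ?thesis .
qed

lemma sum_atLeast1_atMost_periodic:
  fixes g :: "int \<Rightarrow> 'a::comm_monoid_add"
  assumes "periodic N g"
  shows "(\<Sum>j\<in>{1..N}. g (int j)) = (\<Sum>j<N. g (int j))"
  using sum.periodic_window[OF assms, of 1]
  by (simp only: One_nat_def sum.atLeast1_atMost_eq) (simp add: add.commute)

lemma comp_nonneg: "x \<in> B n l \<Longrightarrow> 0 \<le> comp n x i"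
  unfolding B_def comp_def by (auto simp: nat_less_iff)

lemma length_R: "length (fst (R n x y)) = n + 1" "length (snd (R n x y)) = n + 1"
  unfolding R_def by simp_all

lemma wt_R_fst:
  assumes "length y = n + 1"
  shows "wt (fst (R n x y)) = wt y"
proof -
  have "periodic (n + 1) (trop_R1 (n + 1) (comp n x) (comp n y))"
    by (intro trop_R_periodic(1) periodic_comp)
  then have "wt (fst (R n x y)) = (\<Sum>j<n + 1. trop_R1 (n + 1) (comp n x) (comp n y) (int j))"
    by (simp only: wt_eq_sum_comp length_R comp_R_fst sum_atLeast1_atMost_periodic)
  also have "\<dots> = wt y"
    by (simp only: sum_trop_R1 periodic_comp wt_eq_sum_comp[OF assms] sum_atLeast1_atMost_periodic)
  finally show ?thesis .
qed

lemma wt_R_snd: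
  assumes "length x = n + 1"
  shows "wt (snd (R n x y)) = wt x"
proof -
  have "periodic (n + 1) (trop_R2 (n + 1) (comp n x) (comp n y))"
    by (intro trop_R_periodic(2) periodic_comp)
  then have "wt (snd (R n x y)) = (\<Sum>j<n + 1. trop_R2 (n + 1) (comp n x) (comp n y) (int j))"
    by (simp only: wt_eq_sum_comp length_R comp_R_snd sum_atLeast1_atMost_periodic)
  also have "\<dots> = wt x"
    by (simp only: sum_trop_R2 periodic_comp wt_eq_sum_comp[OF assms] sum_atLeast1_atMost_periodic)
  finally show ?thesis .
qed

lemma R_fst_in_B:
  assumes "x \<in> B n l" "y \<in> B n m"
  shows "fst (R n x y) \<in> B n m"
proof -
  have "trop_Q (n + 1) (comp n x) (comp n y) i
      \<le> comp n y i + trop_Q (n + 1) (comp n x) (comp n y) (i - 1)" for i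
    using comp_nonneg assms by (intro trop_Q_le_shift periodic_comp) auto
  then have "0 \<le> trop_R1 (n + 1) (comp n x) (comp n y) i" for i
    unfolding trop_R1_def by (simp add: algebra_simps)
  then have "\<forall>a\<in>set (fst (R n x y)). 0 \<le> a"
    unfolding R_eq_trop_R by auto
  moreover have "length y = n + 1" "wt y = int m"
    using assms(2) unfolding B_def wt_def by auto
  then have "sum_list (fst (R n x y)) = int m"
    using wt_R_fst unfolding wt_def by metis
  ultimately show ?thesis
    unfolding B_def using length_R(1) by blast
qed

lemma u_in_B: "u n M \<in> B n M"
  unfolding B_def u_def by (simp add: sum_list_replicate)

lemma comp_u: "1 \<le> j \<Longrightarrow> j \<le> n + 1 \<Longrightarrow> comp n (u n M) (int j) = (if j = 1 then int M else 0)"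
  unfolding comp_nth u_def by (cases "j - 1") auto

lemma Q_u_0:
  assumes w: "w \<in> B n m" and "m \<le> M"
  shows "Q n 0 (u n M) w = int m - comp n w 1"
proof -
  define f where "f k = (\<Sum>j\<in>{1..<k}. comp n (u n M) (0 + int j)) + (\<Sum>j\<in>{k<..n + 1}. comp n w (0 + int j))"
    for k
  have u_part: "(\<Sum>j\<in>{1..<k}. comp n (u n M) (0 + int j)) = (if 2 \<le> k then int M else 0)"
    if "k \<le> n + 1" for k
  proof -
    have "(\<Sum>j\<in>{1..<k}. comp n (u n M) (0 + int j)) = (\<Sum>j\<in>{1..<k}. if j = 1 then int M else 0)"
      using that by (intro sum.cong) (auto simp: comp_u)
    then show ?thesis
      by simp
  qed
  have "int m = comp n w 1 + (\<Sum>j\<in>{1<..n + 1}. comp n w (int j))"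
    using w wt_eq_sum_comp[of w n] sum.head[of 1 "n + 1" "\<lambda>j. comp n w (int j)"]
    unfolding B_def wt_def by simp
  then have f1: "f 1 = int m - comp n w 1"
    unfolding f_def by simp
  have "f 1 \<le> f k" if "k \<in> {1..n + 1}" for k
  proof (cases "k = 1")
    case False
    then have "f k = int M + (\<Sum>j\<in>{k<..n + 1}. comp n w (0 + int j))"
      unfolding f_def using u_part that by simp
    moreover have "0 \<le> (\<Sum>j\<in>{k<..n + 1}. comp n w (0 + int j))" "0 \<le> comp n w 1"
      using comp_nonneg[OF w] by (simp_all add: sum_nonneg)
    ultimately show ?thesis
      using f1 \<open>m \<le> M\<close> by linarith
  qed simp
  then have "Min (f ` {1..n + 1}) = f 1"
    by (intro Min_eqI) auto
  then show ?thesis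
    unfolding Q_def f_def[symmetric] f1 .
qed

lemma Q_u_1:
  assumes w: "w \<in> B n m"
  shows "Q n 1 (u n M) w = 0"
proof -
  define f where "f k = (\<Sum>j\<in>{1..<k}. comp n (u n M) (1 + int j)) + (\<Sum>j\<in>{k<..n + 1}. comp n w (1 + int j))"
    for k
  have u_part: "(\<Sum>j\<in>{1..<k}. comp n (u n M) (1 + int j)) = 0" if "k \<le> n + 1" for k
    using that comp_u[of "Suc _" n M] by (intro sum.neutral) auto
  have "f (n + 1) = 0"
    unfolding f_def by (simp only: u_part[OF order_refl]) simp
  moreover have "0 \<le> f k" if "k \<in> {1..n + 1}" for k
    unfolding f_def using that u_part comp_nonneg[OF w] by (simp add: sum_nonneg)
  ultimately have "Min (f ` {1..n + 1}) = 0"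
    by (intro Min_eqI) (auto intro!: image_eqI[of 0 f "n + 1"])
  then show ?thesis
    unfolding Q_def f_def[symmetric] .
qed

lemma Q_u_R_fst:
  assumes "w \<in> B n m" "m \<le> M"
  shows "Q n 0 (u n M) (fst (R n (u n l) w)) = Q n 0 (u n M) w - Q n 0 (u n l) w"
proof -
  have "comp n (fst (R n (u n l) w)) 1 = comp n w 1 + Q n 0 (u n l) w - Q n 1 (u n l) w"
    unfolding comp_R_fst trop_R1_def Q_eq_trop_Q by simp
  moreover have "fst (R n (u n l) w) \<in> B n m"
    using R_fst_in_B[OF u_in_B assms(1)] .
  ultimately show ?thesis
    using Q_u_0[OF _ assms(2)] Q_u_1[OF assms(1)] assms(1) by simp
qed

section \<open>Energy of the box-ball system\<close>

fun carrier :: "nat \<Rightarrow> int list \<Rightarrow> int list list \<Rightarrow> int list" where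
  "carrier n v [] = v"
| "carrier n v (p # ps) = carrier n (snd (R n v p)) ps"

definition Edual_last :: "nat \<Rightarrow> int \<Rightarrow> int list list \<Rightarrow> int list \<Rightarrow> int" where
  "Edual_last n i ps z = (\<Sum>j<length ps. Q n i (ps ! j) (moveL n (drop (Suc j) ps) z))"

lemma bbs_run_Cons [simp]:
  "bbs_run n l v (p # ps) =
     (fst (R n v p) # fst (bbs_run n l (snd (R n v p)) ps),
      min (wt p) (int l) - H n v p + snd (bbs_run n l (snd (R n v p)) ps))"
  by (simp add: split_beta Let_def)

declare bbs_run.simps(2) [simp del]

lemma moveL_Nil [simp]: "moveL n [] z = z"
  unfolding moveL_def by simp

lemma moveL_Cons [simp]: "moveL n (p # ps) z = fst (R n p (moveL n ps z))"
  unfolding moveL_def by simp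

lemma Edual_last_Nil [simp]: "Edual_last n i [] z = 0"
  unfolding Edual_last_def by simp

lemma Edual_last_Cons [simp]: "Edual_last n i (p # ps) z = Q n i p (moveL n ps z) + Edual_last n i ps z"
  unfolding Edual_last_def length_Cons sum.lessThan_Suc_shift by simp

lemma moveL_R_carrier:
  "fst (R n v (moveL n ps z)) = moveL n (fst (bbs_run n l v ps)) (fst (R n (carrier n v ps) z))"
proof (induction ps arbitrary: v)
  case (Cons p ps)
  have "fst (R n v (moveL n (p # ps) z)) = fst (R n (fst (R n v p)) (fst (R n (snd (R n v p)) (moveL n ps z))))"
    using R_yang_baxter by simp
  also have "\<dots> = moveL n (fst (bbs_run n l v (p # ps))) (fst (R n (carrier n v (p # ps)) z))"
    unfolding Cons.IH by simp
  finally show ?case .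
qed simp

lemma Edual_last_bbs_run:
  "Edual_last n i ps z - Edual_last n i (fst (bbs_run n l v ps)) (fst (R n (carrier n v ps) z))
     = Q n i (carrier n v ps) z - Q n i v (moveL n ps z)"
proof (induction ps arbitrary: v)
  case (Cons p ps)
  let ?v = "snd (R n v p)" and ?w = "moveL n ps z"
  have "Q n i p ?w + Q n i v (fst (R n p ?w)) = Q n i ?v ?w + Q n i (fst (R n v p)) (fst (R n ?v ?w))"
    by (rule Q_energy)
  moreover have "fst (R n ?v ?w) = moveL n (fst (bbs_run n l ?v ps)) (fst (R n (carrier n ?v ps) z))"
    by (rule moveL_R_carrier)
  ultimately show ?case
    using Cons.IH[of ?v] by simp
qed simp

lemma bbs_run_snoc:
  "bbs_run n l v (ps @ [z]) =
     (fst (bbs_run n l v ps) @ [fst (R n (carrier n v ps) z)],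
      snd (bbs_run n l v ps) + (min (wt z) (int l) - H n (carrier n v ps) z))"
  by (induction ps arbitrary: v) simp_all

lemma Edual_snoc: "Edual n i (q @ [z]) = Edual n i q + Edual_last n i q z"
proof -
  define L where "L = length q"
  define f where "f q' = (\<lambda>(j, m). Q n i (q' ! j) (moveL n (take (m - j - 1) (drop (j + 1) q')) (q' ! m)))"
    for q'
  define P where "P = {(j, m). j < m \<and> m < L}"
  have P_fin: "finite P"
    unfolding P_def by (rule finite_subset[of _ "{..<L} \<times> {..<L}"]) auto
  have pairs: "{(j, m). j < m \<and> m < length (q @ [z])} = P \<union> (\<lambda>j. (j, L)) ` {..<L}"
    unfolding P_def L_def by auto
  have "sum (f (q @ [z])) P = sum (f q) P"
    unfolding P_def L_def f_def by (intro sum.cong) (auto simp: nth_append)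
  also have "\<dots> = Edual n i q"
    unfolding Edual_def P_def L_def f_def ..
  moreover have "sum (f (q @ [z])) ((\<lambda>j. (j, L)) ` {..<L}) = Edual_last n i q z"
    unfolding Edual_last_def L_def f_def
    by (subst sum.reindex) (auto simp: inj_on_def nth_append intro!: sum.cong)
  moreover have "Edual n i (q @ [z]) = sum (f (q @ [z])) (P \<union> (\<lambda>j. (j, L)) ` {..<L})"
    unfolding Edual_def f_def pairs ..
  ultimately show ?thesis
    using P_fin by (subst (asm) sum.union_disjoint) (auto simp: P_def)
qed

lemma moveL_in_B:
  assumes "z \<in> B n m" "set ps \<subseteq> (\<Union>l. B n l)"
  shows "moveL n ps z \<in> B n m"
  using assms by (induction ps) (auto intro: R_fst_in_B)

lemma wt_carrier: "length v = n + 1 \<Longrightarrow> wt (carrier n v ps) = wt v"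
  by (induction ps arbitrary: v) (simp_all add: length_R wt_R_snd)

lemma map_wt_bbs_run:
  assumes "\<forall>x\<in>set ps. length x = n + 1"
  shows "map wt (fst (bbs_run n l v ps)) = map wt ps"
  using assms by (induction ps arbitrary: v) (simp_all add: wt_R_fst)

lemma Edual_bbs_run:
  assumes "set p \<subseteq> (\<Union>m\<le>M. B n m)"
  shows "Edual n 0 (u n M # p) - Edual n 0 (u n M # fst (bbs_run n l (u n l) p)) = snd (bbs_run n l (u n l) p)"
  using assms
proof (induction p rule: rev_induct)
  case (snoc z p)
  let ?v = "u n l"
  let ?T = "fst (bbs_run n l ?v p)" and ?c = "carrier n ?v p" and ?w = "moveL n p z"
  obtain m where z: "z \<in> B n m" "m \<le> M"
    using snoc.prems by auto
  have "set p \<subseteq> (\<Union>l. B n l)"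
    using snoc.prems by auto
  then have w: "?w \<in> B n m"
    by (rule moveL_in_B[OF z(1)])
  have "Edual n 0 (u n M # p @ [z]) = Edual n 0 (u n M # p) + Q n 0 (u n M) ?w + Edual_last n 0 p z"
    using Edual_snoc[of n 0 "u n M # p" z] by simp
  moreover have "Edual n 0 (u n M # ?T @ [fst (R n ?c z)])
      = Edual n 0 (u n M # ?T) + Q n 0 (u n M) (fst (R n ?v ?w)) + Edual_last n 0 ?T (fst (R n ?c z))"
    using Edual_snoc[of n 0 "u n M # ?T" "fst (R n ?c z)"] moveL_R_carrier[of n ?v p z l] by simp
  moreover have "Q n 0 (u n M) (fst (R n ?v ?w)) = Q n 0 (u n M) ?w - Q n 0 ?v ?w"
    using Q_u_R_fst[OF w z(2)] .
  moreover have "Edual_last n 0 p z - Edual_last n 0 ?T (fst (R n ?c z)) = Q n 0 ?c z - Q n 0 ?v ?w"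
    by (rule Edual_last_bbs_run)
  moreover have "H n ?c z = min (int l) (wt z) - Q n 0 ?c z"
    using wt_carrier[of "u n l" n p] u_in_B unfolding H_def B_def wt_def by simp
  ultimately show ?case
    using snoc by (simp add: bbs_run_snoc)
qed simp

lemma Edual_periodic: "Edual n (int n + 1) q = Edual n 0 q"
proof -
  have "Q n (int n + 1) x y = Q n 0 x y" for x y
    using periodic_shift_left[OF trop_Q_periodic[OF periodic_comp[of n x] periodic_comp[of n y]], of 0]
    unfolding Q_eq_trop_Q by (simp add: add.commute)
  then show ?thesis
    unfolding Edual_def by simp
qed

lemma foldr_max_ge: "x \<in> set xs \<Longrightarrow> f x \<le> foldr max (map f xs) (0::int)"
  by (induction xs) auto

lemma set_subset_B_max_wt:
  assumes "\<forall>x\<in>set p. \<exists>m. x \<in> B n m"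
  shows "set p \<subseteq> (\<Union>m\<le>nat (foldr max (map wt p) 0). B n m)"
proof
  fix x assume "x \<in> set p"
  then obtain m where "x \<in> B n m"
    using assms by blast
  moreover have "wt x \<le> foldr max (map wt p) 0"
    using foldr_max_ge[OF \<open>x \<in> set p\<close>] .
  ultimately show "x \<in> (\<Union>m\<le>nat (foldr max (map wt p) 0). B n m)"
    unfolding B_def wt_def by auto
qed

theorem proposition4p8:
  fixes n l :: nat and lam :: "nat list" and p :: "int list list"
  assumes "n \<ge> 1" and "l \<ge> 1"
    and "length lam = length p"
    and "\<forall>j < length p. lam ! j \<ge> 1 \<and> p ! j \<in> B n (lam ! j)"
  shows "Energy n (int n + 1) p - Energy n (int n + 1) (T n l p) = E n l p"
proof -
  (* Only the membership p ! j \<in> B n (lam ! j) is needed; the positivity hypotheses are not. *)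
  define M where "M = nat (foldr max (map wt p) 0)"
  have "\<forall>x\<in>set p. \<exists>m. x \<in> B n m"
    using assms(4) by (metis in_set_conv_nth)
  then have p_B: "set p \<subseteq> (\<Union>m\<le>M. B n m)"
    unfolding M_def by (rule set_subset_B_max_wt)
  then have "map wt (T n l p) = map wt p"
    unfolding T_def B_def by (intro map_wt_bbs_run) auto
  then have "Energy n (int n + 1) p = Edual n 0 (u n M # p)"
      "Energy n (int n + 1) (T n l p) = Edual n 0 (u n M # T n l p)"
    unfolding Energy_def Edual_periodic M_def by simp_all
  then show ?thesis
    unfolding T_def E_def using Edual_bbs_run[OF p_B] by simp
qed

end
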